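(* Let $X$ be an infinite-dimensional Banach space over $\mathbb{R}$ with a Schauder basis $(a_n)_{n\in\mathbb{N}}$, and let $A=\{a_n:n\in\mathbb{N}\}$. Then $A$ is a topologically independent subset of the additive topological group of $X$, but $\langle A\rangle$ is not the Tychonoff direct sum $\bigoplus_{a\in A}\langle a\rangle$.
   Context: A subset $A$ of an abelian topological group $G$ (neutral element $0$) is topologically independent if $0\notin A$ and for every neighborhood $W$ of $0$ there is a neighborhood $U$ of $0$ such that for every finite $F\subseteq A$ and every family of integers $\{z_a: a\in F\}$, the condition $\sum_{a\in F}z_a a\in U$ implies $z_a a\in W$ for all $a\in F$. $\langle A\rangle$ is the additive subgroup generated by $A$ with the subspace topology. The Tychonoff direct sum $\bigoplus_{a\in A}\langle a\rangle$ is the direct sum of the groups $\langle a\rangle$ (subspace topology) with the topology induced from the product $\prod_{a\in A}\langle a\rangle$; "$\langle A\rangle$ is the Tychonoff direct sum" means the map $(g_a)\mapsto\sum_a g_a$ is an isomorphism of topological groups from $\bigoplus_{a\in A}\langle a\rangle$ onto $\langle A\rangle$. *)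

theory Defs
  imports "HOL-Analysis.Analysis"
begin

definition int_mult :: "int \<Rightarrow> 'a::ab_group_add \<Rightarrow> 'a" where
  "int_mult z a = (if 0 \<le> z then (\<Sum>_\<in>{..<nat z}. a) else - (\<Sum>_\<in>{..<nat (- z)}. a))"

definition nhd0 :: "'a::{topological_space, ab_group_add} set \<Rightarrow> bool" where
  "nhd0 W \<longleftrightarrow> (\<exists>V. open V \<and> 0 \<in> V \<and> V \<subseteq> W)"

definition top_independent :: "'a::{topological_space, ab_group_add} set \<Rightarrow> bool" where
  "top_independent A \<longleftrightarrow> 0 \<notin> A \<and>
     (\<forall>W. nhd0 W \<longrightarrow> (\<exists>U. nhd0 U \<and>
        (\<forall>F z. finite F \<and> F \<subseteq> A \<and> (\<Sum>a\<in>F. int_mult (z a) a) \<in> U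
               \<longrightarrow> (\<forall>a\<in>F. int_mult (z a) a \<in> W))))"

definition gen_subgroup :: "'a::ab_group_add set \<Rightarrow> 'a set" where
  "gen_subgroup A = {(\<Sum>a\<in>F. int_mult (z a) a) | F z. finite F \<and> F \<subseteq> A}"

definition dsum_carrier :: "'a::ab_group_add set \<Rightarrow> ('a \<Rightarrow> 'a) set" where
  "dsum_carrier A = {g \<in> (\<Pi>\<^sub>E a\<in>A. gen_subgroup {a}). finite {a\<in>A. g a \<noteq> 0}}"

definition dsum_topology :: "'a::{topological_space, ab_group_add} set \<Rightarrow> ('a \<Rightarrow> 'a) topology" where
  "dsum_topology A = subtopology (product_topology (\<lambda>a. subtopology euclidean (gen_subgroup {a})) A)
                                 (dsum_carrier A)"

definition dsum_map :: "'a::ab_group_add set \<Rightarrow> ('a \<Rightarrow> 'a) \<Rightarrow> 'a" where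
  "dsum_map A g = (\<Sum>a\<in>{a\<in>A. g a \<noteq> 0}. g a)"

text \<open><A> is the Tychonoff direct sum: the summation map is an isomorphism of topological groups
  from the Tychonoff direct sum onto <A> (with the subspace topology).\<close>
definition is_tychonoff_direct_sum :: "'a::{topological_space, ab_group_add} set \<Rightarrow> bool" where
  "is_tychonoff_direct_sum A \<longleftrightarrow>
     (\<forall>g\<in>dsum_carrier A. \<forall>h\<in>dsum_carrier A.
        dsum_map A (restrict (\<lambda>a. g a + h a) A) = dsum_map A g + dsum_map A h) \<and>
     homeomorphic_map (dsum_topology A) (subtopology euclidean (gen_subgroup A)) (dsum_map A)"

definition schauder_basis :: "(nat \<Rightarrow> 'a::real_normed_vector) \<Rightarrow> bool" where
  "schauder_basis b \<longleftrightarrow> (\<forall>x. \<exists>!c::nat \<Rightarrow> real. (\<lambda>n. \<Sum>i<n. c i *\<^sub>R b i) \<longlonglongrightarrow> x)"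

definition infinite_dimensional :: "'a::real_vector itself \<Rightarrow> bool" where
  "infinite_dimensional _ \<longleftrightarrow> \<not> (\<exists>S::'a set. finite S \<and> span S = UNIV)"

end

theory Submission
  imports Defs
begin

text \<open>
  The coefficient functionals of a Schauder basis \<open>b\<close> are uniformly bounded. The norm
  \<open>|||x||| = sup\<^sub>n \<parallel>P\<^sub>n x\<parallel>\<close> built from the partial-sum projections dominates \<open>\<parallel>x\<parallel>\<close> and is complete, so the
  Baire category argument behind the bounded inverse theorem makes it equivalent to \<open>\<parallel>x\<parallel>\<close>; hence
  \<open>\<bar>c\<^sub>i(x)\<bar> \<parallel>b\<^sub>i\<parallel> \<le> 2 |||x||| \<le> K \<parallel>x\<parallel>\<close>. So in a small combination of basis vectors every term is
  small, which is topological independence. On the other hand a neighbourhood of zero in the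
  Tychonoff direct sum of infinitely many cyclic groups restricts only finitely many coordinates,
  so it contains arbitrarily large multiples of a single basis vector, whose images under the
  summation map are not small: the summation map is not continuous.
\<close>

section \<open>Bounded inverse theorem for a finer complete norm\<close>

lemma Baire_sublevel_ball:
  fixes p :: "'a::banach \<Rightarrow> real"
  shows "\<exists>c x0 r. 0 < r \<and> ball x0 r \<subseteq> closure {x. p x \<le> c}"
proof (rule ccontr)
  assume no_ball: "\<not> ?thesis"
  define E where "E m = closure {x. p x \<le> real m}" for m :: nat
  have "euclidean interior_of \<Union>(range E) = {}"
  proof (rule Baire_category_alt)
    show "completely_metrizable_space (euclidean::'a topology) \<or>
          locally_compact_space (euclidean::'a topology) \<and> regular_space (euclidean::'a topology)"
      using completely_metrizable_space_euclidean by blast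
    fix T assume "T \<in> range E"
    then obtain m where m: "T = E m" by blast
    have "interior T = {}"
    proof (rule ccontr)
      assume "interior T \<noteq> {}"
      then obtain x0 r where "0 < r" "ball x0 r \<subseteq> interior T"
        using open_interior[of T] unfolding open_contains_ball by blast
      then show False
        using no_ball interior_subset[of T] m unfolding E_def by blast
    qed
    then show "closedin euclidean T \<and> euclidean interior_of T = {}"
      using m by (simp add: E_def)
  qed simp
  moreover have "x \<in> E (nat \<lceil>p x\<rceil>)" for x
    unfolding E_def by (intro subsetD[OF closure_subset]) (simp add: real_nat_ceiling_ge)
  then have "\<Union>(range E) = UNIV" by blast
  ultimately show False by simp
qed

locale finer_complete_norm =
  fixes p :: "'a::banach \<Rightarrow> real"
  assumes p_add_le: "p (x + y) \<le> p x + p y"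
    and p_scaleR: "p (r *\<^sub>R x) = \<bar>r\<bar> * p x"
    and norm_le_p: "norm x \<le> p x"
    and p_complete: "(\<And>e. 0 < e \<Longrightarrow> \<exists>M. \<forall>m\<ge>M. \<forall>n\<ge>M. p (f m - f n) < e) \<Longrightarrow>
      \<exists>l. (\<lambda>n. p (f n - l)) \<longlonglongrightarrow> 0"
begin

lemma p_zero [simp]: "p 0 = 0"
  using p_scaleR[of 0 0] by simp

lemma p_nonneg: "0 \<le> p x"
  using norm_le_p[of x] norm_ge_zero order_trans by blast

lemma p_minus_commute: "p (x - y) = p (y - x)"
  using p_scaleR[of "-1" "y - x"] by simp

lemma p_diff_le: "p (x - z) \<le> p (x - y) + p (y - z)"
  using p_add_le[of "x - y" "y - z"] by simp

lemma p_telescope: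
  assumes step: "\<And>n. p (f (Suc n) - f n) \<le> C * (1/2)^n" and "m \<le> n"
  shows "p (f n - f m) \<le> 2 * C * (1/2)^m - 2 * C * (1/2)^n"
  using \<open>m \<le> n\<close>
proof (induction n rule: dec_induct)
  case (step n)
  have "p (f (Suc n) - f m) \<le> p (f (Suc n) - f n) + p (f n - f m)"
    by (rule p_diff_le)
  also have "\<dots> \<le> C * (1/2)^n + (2 * C * (1/2)^m - 2 * C * (1/2)^n)"
    using assms(1)[of n] step.IH by linarith
  finally show ?case by simp
qed simp

lemma p_convergent_geometric:
  assumes step: "\<And>n. p (f (Suc n) - f n) \<le> C * (1/2)^n"
  shows "\<exists>l. (\<lambda>n. p (f n - l)) \<longlonglongrightarrow> 0"
proof (rule p_complete)
  have C: "0 \<le> C" using step[of 0] p_nonneg[of "f 1 - f 0"] by simp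
  fix e :: real assume "0 < e"
  then obtain M where M: "(1/2::real)^M < e / (2 * C + 1)"
    using real_arch_pow_inv[of "e / (2 * C + 1)" "1/2"] C by auto
  have small: "p (f n - f m) < e" if "M \<le> m" "m \<le> n" for m n
  proof -
    have "0 \<le> 2 * C * (1/2::real)^n" using C by simp
    then have "p (f n - f m) \<le> 2 * C * (1/2)^m" using p_telescope[OF step \<open>m \<le> n\<close>] by linarith
    also have "\<dots> \<le> (2 * C + 1) * (1/2)^M"
      using C \<open>M \<le> m\<close> by (intro mult_mono power_decreasing) auto
    also have "\<dots> < e" using M C by (simp add: field_simps)
    finally show ?thesis .
  qed
  show "\<exists>M. \<forall>m\<ge>M. \<forall>n\<ge>M. p (f m - f n) < e"
    using small p_minus_commute by (metis nle_le)
qed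

lemma p_approx_in_ball:
  obtains c r where "0 < r" and "0 \<le> c"
    and "\<And>y e. norm y < r \<Longrightarrow> 0 < e \<Longrightarrow> \<exists>z. p z \<le> c \<and> norm (y - z) < e"
proof -
  obtain c x0 r where r: "0 < r" and B: "ball x0 r \<subseteq> closure {x. p x \<le> c}"
    using Baire_sublevel_ball by blast
  have near: "\<exists>z. p z \<le> 2 * c \<and> norm (y - z) < e" if "norm y < r" "0 < e" for y e
  proof -
    have "x0 + y \<in> closure {x. p x \<le> c}" "x0 \<in> closure {x. p x \<le> c}"
      using B r that(1) by (auto simp: dist_norm)
    moreover have "0 < e / 2" using \<open>0 < e\<close> by simp
    ultimately obtain u v where "p u \<le> c" "dist u (x0 + y) < e/2" "p v \<le> c" "dist v x0 < e/2"
      unfolding closure_approachable by blast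
    moreover have "p (u - v) \<le> p u + p v"
      using p_add_le[of u "- v"] p_scaleR[of "-1" v] by simp
    moreover have "norm (y - (u - v)) \<le> norm (x0 + y - u) + norm (x0 - v)"
      using norm_triangle_ineq4[of "x0 + y - u" "x0 - v"] by (simp add: algebra_simps)
    ultimately show ?thesis by (intro exI[of _ "u - v"]) (auto simp: dist_norm norm_minus_commute)
  qed
  have "0 \<le> 2 * c"
  proof -
    obtain z where "p z \<le> 2 * c" using near[of 0 1] r by auto
    then show ?thesis using p_nonneg[of z] by simp
  qed
  from r this near show thesis by (rule that)
qed

lemma p_approx:
  obtains K where "0 \<le> K" and "\<And>y e. 0 < e \<Longrightarrow> \<exists>z. p z \<le> K * norm y \<and> norm (y - z) < e"
proof -
  obtain c r where r: "0 < r" and "0 \<le> c"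
    and near: "\<And>y e. norm y < r \<Longrightarrow> 0 < e \<Longrightarrow> \<exists>z. p z \<le> c \<and> norm (y - z) < e"
    by (rule p_approx_in_ball) blast
  show thesis
  proof
    show "0 \<le> 2 * c / r" using \<open>0 \<le> c\<close> r by simp
    fix y :: 'a and e :: real assume "0 < e"
    show "\<exists>z. p z \<le> 2 * c / r * norm y \<and> norm (y - z) < e"
    proof (cases "y = 0")
      case True then show ?thesis using \<open>0 < e\<close> by (intro exI[of _ 0]) simp
    next
      case False
      define t where "t = r / (2 * norm y)"
      have t: "0 < t" "norm (t *\<^sub>R y) < r" using False r by (simp_all add: t_def)
      then obtain z where z: "p z \<le> c" "norm (t *\<^sub>R y - z) < t * e"
        using near[of "t *\<^sub>R y" "t * e"] \<open>0 < e\<close> by auto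
      have "p (inverse t *\<^sub>R z) \<le> inverse t * c"
        using z(1) t(1) by (simp add: p_scaleR mult_left_mono)
      also have "\<dots> = 2 * c / r * norm y" using False r by (simp add: t_def field_simps)
      finally have "p (inverse t *\<^sub>R z) \<le> 2 * c / r * norm y" .
      moreover have "t *\<^sub>R y - z = t *\<^sub>R (y - inverse t *\<^sub>R z)" using t(1) by (simp add: algebra_simps)
      then have "norm (y - inverse t *\<^sub>R z) < e" using z(2) t(1) by simp
      ultimately show ?thesis by blast
    qed
  qed
qed

lemma approximating_series:
  assumes approx: "\<And>y e. 0 < e \<Longrightarrow> \<exists>z. p z \<le> K * norm y \<and> norm (y - z) < e"
    and "0 \<le> K" and "y \<noteq> 0"
  obtains z where "\<And>k. p (z k) \<le> K * norm y * (1/2)^k"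
    and "\<And>n. norm (y - (\<Sum>k<n. z k)) \<le> norm y * (1/2)^n"
proof -
  define Z where "Z y e = (SOME z. p z \<le> K * norm y \<and> norm (y - z) < e)" for y e
  have Z: "p (Z y e) \<le> K * norm y" "norm (y - Z y e) < e" if "0 < e" for y e
    using someI_ex[OF approx[OF that, of y]] unfolding Z_def by auto
  \<comment> \<open>\<open>R k\<close> is the remainder after \<open>k\<close> steps; step \<open>k\<close> approximates it to within \<open>\<parallel>y\<parallel> / 2\<^sup>k\<^sup>+\<^sup>1\<close>\<close>
  define R where "R = rec_nat y (\<lambda>k r. r - Z r (norm y * (1/2)^Suc k))"
  define z where "z k = Z (R k) (norm y * (1/2)^Suc k)" for k
  have R: "R 0 = y" "R (Suc k) = R k - z k" for k by (simp_all add: R_def z_def)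
  have e: "0 < norm y * (1/2::real)^Suc k" for k using \<open>y \<noteq> 0\<close> by simp
  have norm_R: "norm (R k) \<le> norm y * (1/2)^k" for k
  proof (cases k)
    case (Suc j)
    then show ?thesis using Z(2)[OF e[of j], of "R j"] by (simp add: R(2) z_def)
  qed (simp add: R(1))
  show thesis
  proof
    show "p (z k) \<le> K * norm y * (1/2)^k" for k
    proof -
      have "p (z k) \<le> K * norm (R k)" using Z(1)[OF e] by (simp add: z_def)
      also have "\<dots> \<le> K * norm y * (1/2)^k"
        using mult_left_mono[OF norm_R \<open>0 \<le> K\<close>] by (simp add: mult.assoc)
      finally show ?thesis .
    qed
    have "y - (\<Sum>k<n. z k) = R n" for n by (induction n) (simp_all add: R)
    then show "norm (y - (\<Sum>k<n. z k)) \<le> norm y * (1/2)^n" for n using norm_R by simp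
  qed
qed

lemma p_le_norm:
  obtains K where "0 \<le> K" and "\<And>x. p x \<le> K * norm x"
proof -
  obtain K where "0 \<le> K" and approx: "\<And>y e. 0 < e \<Longrightarrow> \<exists>z. p z \<le> K * norm y \<and> norm (y - z) < e"
    using p_approx by blast
  have "p y \<le> 2 * K * norm y" for y
  proof (cases "y = 0")
    case False
    obtain z where pz: "\<And>k. p (z k) \<le> K * norm y * (1/2)^k"
      and close: "\<And>n. norm (y - (\<Sum>k<n. z k)) \<le> norm y * (1/2)^n"
      using approximating_series[OF approx \<open>0 \<le> K\<close> False] by blast
    \<comment> \<open>the partial sums converge for \<open>p\<close> by completeness, and to \<open>y\<close> in norm; as \<open>p\<close> dominates the
      norm the two limits agree\<close>
    define s where "s n = (\<Sum>k<n. z k)" for n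
    have step: "p (s (Suc n) - s n) \<le> K * norm y * (1/2)^n" for n using pz by (simp add: s_def)
    obtain w where w: "(\<lambda>n. p (s n - w)) \<longlonglongrightarrow> 0"
      using p_convergent_geometric[OF step] by blast
    have "(\<lambda>n. s n - w) \<longlonglongrightarrow> 0"
      by (rule Lim_null_comparison[OF always_eventually w]) (simp add: norm_le_p)
    then have "s \<longlonglongrightarrow> w" by (rule LIM_zero_cancel)
    moreover have "(\<lambda>n. norm y * (1/2)^n) \<longlonglongrightarrow> 0"
      by (rule tendsto_mult_right_zero[OF LIMSEQ_power_zero]) simp
    then have "(\<lambda>n. y - s n) \<longlonglongrightarrow> 0"
      by (rule Lim_null_comparison[OF always_eventually, rotated]) (simp add: close s_def)
    then have "s \<longlonglongrightarrow> y" using tendsto_diff[OF tendsto_const, of "\<lambda>n. y - s n" 0 sequentially y] by simp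
    ultimately have "w = y" by (rule LIMSEQ_unique)
    have bound: "p y \<le> p (s n - y) + 2 * K * norm y" for n
    proof -
      have "0 \<le> 2 * (K * norm y) * (1/2::real)^n" using \<open>0 \<le> K\<close> by simp
      then have "p (s n) \<le> 2 * K * norm y"
        using p_telescope[OF step, of 0 n] by (simp add: s_def)
      then show ?thesis using p_add_le[of "y - s n" "s n"] p_minus_commute[of y "s n"] by simp
    qed
    have "(\<lambda>n. p (s n - y) + 2 * K * norm y) \<longlonglongrightarrow> 2 * K * norm y"
      using tendsto_add[OF w tendsto_const, of "2 * K * norm y"] \<open>w = y\<close> by simp
    then show ?thesis by (rule LIMSEQ_le_const) (use bound in blast)
  qed simp
  then show thesis using that[of "2 * K"] \<open>0 \<le> K\<close> by simp
qed

end

section \<open>Coefficients and projections of a Schauder basis\<close>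

definition schauder_coeff :: "(nat \<Rightarrow> 'a::real_normed_vector) \<Rightarrow> 'a \<Rightarrow> nat \<Rightarrow> real" where
  "schauder_coeff b x = (THE c. (\<lambda>n. \<Sum>i<n. c i *\<^sub>R b i) \<longlonglongrightarrow> x)"

definition schauder_proj :: "(nat \<Rightarrow> 'a::real_normed_vector) \<Rightarrow> nat \<Rightarrow> 'a \<Rightarrow> 'a" where
  "schauder_proj b n x = (\<Sum>i<n. schauder_coeff b x i *\<^sub>R b i)"

definition basis_norm :: "(nat \<Rightarrow> 'a::real_normed_vector) \<Rightarrow> 'a \<Rightarrow> real" where
  "basis_norm b x = (SUP n. norm (schauder_proj b n x))"

lemma tendsto_partial_sums_finite_support:
  assumes "\<And>k. M \<le> k \<Longrightarrow> c k = 0"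
  shows "(\<lambda>n. \<Sum>i<n. c i *\<^sub>R b i) \<longlonglongrightarrow> (\<Sum>i<M. c i *\<^sub>R (b i :: 'a::real_normed_vector))"
proof (rule tendsto_eventually, rule eventually_sequentiallyI)
  show "(\<Sum>i<n. c i *\<^sub>R b i) = (\<Sum>i<M. c i *\<^sub>R b i)" if "M \<le> n" for n
    by (rule sum.mono_neutral_right) (use that assms in auto)
qed

context
  fixes b :: "nat \<Rightarrow> 'a::real_normed_vector"
  assumes basis: "schauder_basis b"
begin

lemma schauder_expansion: "(\<lambda>n. \<Sum>i<n. schauder_coeff b x i *\<^sub>R b i) \<longlonglongrightarrow> x"
proof -
  have "\<exists>!c. (\<lambda>n. \<Sum>i<n. c i *\<^sub>R b i) \<longlonglongrightarrow> x" using basis unfolding schauder_basis_def ..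
  then show ?thesis unfolding schauder_coeff_def by (rule theI')
qed

lemma schauder_coeff_eqI:
  assumes "(\<lambda>n. \<Sum>i<n. c i *\<^sub>R b i) \<longlonglongrightarrow> x"
  shows "schauder_coeff b x = c"
proof -
  have "\<exists>!c. (\<lambda>n. \<Sum>i<n. c i *\<^sub>R b i) \<longlonglongrightarrow> x" using basis unfolding schauder_basis_def ..
  then show ?thesis unfolding schauder_coeff_def by (rule the1_equality) (rule assms)
qed

lemma schauder_coeff_add: "schauder_coeff b (x + y) = (\<lambda>i. schauder_coeff b x i + schauder_coeff b y i)"
  by (rule schauder_coeff_eqI)
    (use tendsto_add[OF schauder_expansion schauder_expansion] in \<open>simp add: scaleR_add_left sum.distrib\<close>)

lemma schauder_coeff_scaleR: "schauder_coeff b (r *\<^sub>R x) = (\<lambda>i. r * schauder_coeff b x i)"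
  by (rule schauder_coeff_eqI)
    (use tendsto_scaleR[OF tendsto_const schauder_expansion] in \<open>simp add: scaleR_sum_right\<close>)

lemma schauder_coeff_diff: "schauder_coeff b (x - y) = (\<lambda>i. schauder_coeff b x i - schauder_coeff b y i)"
  using schauder_coeff_add[of x "- y"] schauder_coeff_scaleR[of "-1" y] by simp

lemma schauder_coeff_finite_sum:
  assumes "\<And>k. M \<le> k \<Longrightarrow> c k = 0"
  shows "schauder_coeff b (\<Sum>i<M. c i *\<^sub>R b i) = c"
  by (rule schauder_coeff_eqI) (rule tendsto_partial_sums_finite_support[OF assms])

lemma schauder_coeff_basis: "schauder_coeff b (b j) = (\<lambda>i. if i = j then 1 else 0)"
proof -
  have "(\<Sum>i<Suc j. (if i = j then 1 else 0) *\<^sub>R b i) = (\<Sum>i<Suc j. if i = j then b i else 0)"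
    by (rule sum.cong) auto
  also have "\<dots> = b j" by simp
  finally show ?thesis using schauder_coeff_finite_sum[of "Suc j" "\<lambda>i. if i = j then 1 else 0"] by simp
qed

lemma schauder_basis_nonzero: "b j \<noteq> 0"
proof
  have "schauder_coeff b 0 = (\<lambda>i. 0)" using schauder_coeff_scaleR[of 0 0] by simp
  moreover assume "b j = 0"
  ultimately have "schauder_coeff b (b j) j = 0" by simp
  then show False by (simp add: schauder_coeff_basis)
qed

lemma schauder_basis_inj: "inj b"
proof (rule injI)
  fix i j assume "b i = b j"
  then have "schauder_coeff b (b i) i = schauder_coeff b (b j) i" by simp
  then show "i = j" unfolding schauder_coeff_basis by (simp split: if_splits)
qed

lemma schauder_coeff_sum:
  assumes "finite F" "F \<subseteq> range b"
  shows "schauder_coeff b (\<Sum>a\<in>F. f a *\<^sub>R a) = (\<lambda>j. if b j \<in> F then f (b j) else 0)"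
proof -
  define c where "c j = (if b j \<in> F then f (b j) else 0)" for j
  obtain M where M: "b -` F \<subseteq> {..<M}"
    using finite_nat_bounded[OF finite_vimageI[OF assms(1) schauder_basis_inj]] by blast
  have "(\<Sum>a\<in>F. f a *\<^sub>R a) = (\<Sum>j\<in>b -` F. c j *\<^sub>R b j)"
  proof (rule sum.reindex_cong)
    show "inj_on b (b -` F)" using schauder_basis_inj by (rule inj_on_subset) simp
    show "F = b ` (b -` F)" using assms(2) by blast
  qed (simp add: c_def)
  also have "\<dots> = (\<Sum>j<M. c j *\<^sub>R b j)"
    by (rule sum.mono_neutral_left) (use M in \<open>auto simp: c_def\<close>)
  also have "schauder_coeff b \<dots> = c"
    by (rule schauder_coeff_finite_sum) (use M in \<open>force simp: c_def\<close>)
  finally show ?thesis unfolding c_def .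
qed

lemma schauder_proj_tendsto: "(\<lambda>n. schauder_proj b n x) \<longlonglongrightarrow> x"
  unfolding schauder_proj_def by (rule schauder_expansion)

lemma schauder_proj_add: "schauder_proj b n (x + y) = schauder_proj b n x + schauder_proj b n y"
  unfolding schauder_proj_def schauder_coeff_add by (simp add: scaleR_add_left sum.distrib)

lemma schauder_proj_scaleR: "schauder_proj b n (r *\<^sub>R x) = r *\<^sub>R schauder_proj b n x"
  unfolding schauder_proj_def schauder_coeff_scaleR by (simp add: scaleR_sum_right)

lemma schauder_proj_diff: "schauder_proj b n (x - y) = schauder_proj b n x - schauder_proj b n y"
  using schauder_proj_add[of n x "- y"] schauder_proj_scaleR[of n "-1" y] by simp

lemma bdd_above_norm_schauder_proj: "bdd_above (range (\<lambda>n. norm (schauder_proj b n x)))"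
proof -
  have "Bseq (\<lambda>n. schauder_proj b n x)"
    using schauder_proj_tendsto by (intro convergent_imp_Bseq convergentI)
  then show ?thesis unfolding Bseq_def by (auto intro: bdd_aboveI2)
qed

lemma norm_schauder_proj_le: "norm (schauder_proj b n x) \<le> basis_norm b x"
  unfolding basis_norm_def by (rule cSUP_upper[OF _ bdd_above_norm_schauder_proj]) simp

lemma basis_norm_le: "(\<And>n. norm (schauder_proj b n x) \<le> e) \<Longrightarrow> basis_norm b x \<le> e"
  unfolding basis_norm_def by (rule cSUP_least) auto

lemma norm_le_basis_norm: "norm x \<le> basis_norm b x"
  by (rule Lim_norm_ubound[OF _ schauder_proj_tendsto]) (auto intro!: always_eventually norm_schauder_proj_le)

lemma basis_norm_nonneg: "0 \<le> basis_norm b x"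
  using norm_le_basis_norm[of x] norm_ge_zero[of x] by linarith

lemma basis_norm_add_le: "basis_norm b (x + y) \<le> basis_norm b x + basis_norm b y"
proof (rule basis_norm_le)
  fix n
  have "norm (schauder_proj b n (x + y)) \<le> norm (schauder_proj b n x) + norm (schauder_proj b n y)"
    unfolding schauder_proj_add by (rule norm_triangle_ineq)
  also have "\<dots> \<le> basis_norm b x + basis_norm b y" by (intro add_mono norm_schauder_proj_le)
  finally show "norm (schauder_proj b n (x + y)) \<le> basis_norm b x + basis_norm b y" .
qed

lemma basis_norm_scaleR_le: "basis_norm b (r *\<^sub>R x) \<le> \<bar>r\<bar> * basis_norm b x"
  by (rule basis_norm_le) (simp add: schauder_proj_scaleR mult_left_mono norm_schauder_proj_le)

lemma basis_norm_scaleR: "basis_norm b (r *\<^sub>R x) = \<bar>r\<bar> * basis_norm b x"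
proof (cases "r = 0")
  case True
  then show ?thesis
    using basis_norm_scaleR_le[of 0 x] norm_le_basis_norm[of 0] by simp
next
  case False
  have "basis_norm b x = basis_norm b (inverse r *\<^sub>R (r *\<^sub>R x))" using False by simp
  also have "\<dots> \<le> \<bar>inverse r\<bar> * basis_norm b (r *\<^sub>R x)" by (rule basis_norm_scaleR_le)
  finally have "\<bar>r\<bar> * basis_norm b x \<le> basis_norm b (r *\<^sub>R x)"
    using False by (simp add: field_simps abs_inverse)
  then show ?thesis using basis_norm_scaleR_le[of r x] by linarith
qed

lemma schauder_coeff_le_basis_norm: "\<bar>schauder_coeff b x i\<bar> * norm (b i) \<le> 2 * basis_norm b x"
proof -
  have "\<bar>schauder_coeff b x i\<bar> * norm (b i) = norm (schauder_proj b (Suc i) x - schauder_proj b i x)"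
    by (simp add: schauder_proj_def)
  also have "\<dots> \<le> norm (schauder_proj b (Suc i) x) + norm (schauder_proj b i x)"
    by (rule norm_triangle_ineq4)
  also have "\<dots> \<le> 2 * basis_norm b x"
    using norm_schauder_proj_le[of "Suc i" x] norm_schauder_proj_le[of i x] by simp
  finally show ?thesis .
qed

lemma schauder_coeff_convergent:
  assumes Cauchy: "\<And>e. 0 < e \<Longrightarrow> \<exists>M. \<forall>m\<ge>M. \<forall>n\<ge>M. basis_norm b (x m - x n) < e"
  shows "convergent (\<lambda>k. schauder_coeff b (x k) i)"
proof -
  have nb: "0 < norm (b i)" using schauder_basis_nonzero by simp
  have "Cauchy (\<lambda>k. schauder_coeff b (x k) i)"
  proof (rule CauchyI)
    fix e :: real assume "0 < e"
    then obtain M where M: "\<forall>m\<ge>M. \<forall>n\<ge>M. basis_norm b (x m - x n) < e * norm (b i) / 2"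
      using Cauchy[of "e * norm (b i) / 2"] nb by auto
    have "\<bar>schauder_coeff b (x m) i - schauder_coeff b (x n) i\<bar> < e" if "M \<le> m" "M \<le> n" for m n
    proof -
      have "\<bar>schauder_coeff b (x m) i - schauder_coeff b (x n) i\<bar> * norm (b i) \<le> 2 * basis_norm b (x m - x n)"
        using schauder_coeff_le_basis_norm[of "x m - x n" i] by (simp add: schauder_coeff_diff)
      moreover have "basis_norm b (x m - x n) < e * norm (b i) / 2" using M that by blast
      ultimately have "\<bar>schauder_coeff b (x m) i - schauder_coeff b (x n) i\<bar> * norm (b i) < e * norm (b i)"
        by linarith
      then show ?thesis using nb by simp
    qed
    then show "\<exists>M. \<forall>m\<ge>M. \<forall>n\<ge>M. norm (schauder_coeff b (x m) i - schauder_coeff b (x n) i) < e"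
      by auto
  qed
  then show ?thesis by (simp add: Cauchy_convergent_iff)
qed

lemma schauder_proj_uniform_limit:
  assumes Cauchy: "\<And>e. 0 < e \<Longrightarrow> \<exists>M. \<forall>m\<ge>M. \<forall>n\<ge>M. basis_norm b (x m - x n) < e"
    and c: "\<And>i. (\<lambda>k. schauder_coeff b (x k) i) \<longlonglongrightarrow> c i"
  shows "uniform_limit UNIV (\<lambda>k n. schauder_proj b n (x k)) (\<lambda>n. \<Sum>i<n. c i *\<^sub>R b i) sequentially"
proof (rule uniform_limitI)
  fix e :: real assume "0 < e"
  then obtain K where K: "\<forall>k\<ge>K. \<forall>l\<ge>K. basis_norm b (x k - x l) < e / 2"
    using Cauchy[of "e / 2"] by auto
  have bound: "norm (schauder_proj b n (x k) - (\<Sum>i<n. c i *\<^sub>R b i)) \<le> e / 2" if "K \<le> k" for k n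
  proof (rule Lim_norm_ubound)
    show "(\<lambda>l. schauder_proj b n (x k) - schauder_proj b n (x l))
        \<longlonglongrightarrow> schauder_proj b n (x k) - (\<Sum>i<n. c i *\<^sub>R b i)"
      unfolding schauder_proj_def by (intro tendsto_diff tendsto_const tendsto_sum tendsto_scaleR c)
    have "norm (schauder_proj b n (x k) - schauder_proj b n (x l)) \<le> e / 2" if "K \<le> l" for l
    proof -
      have "norm (schauder_proj b n (x k) - schauder_proj b n (x l)) = norm (schauder_proj b n (x k - x l))"
        by (simp add: schauder_proj_diff)
      also have "\<dots> \<le> basis_norm b (x k - x l)" by (rule norm_schauder_proj_le)
      also have "\<dots> < e / 2" using K \<open>K \<le> k\<close> that by blast
      finally show ?thesis by simp
    qed
    then show "\<forall>\<^sub>F l in sequentially. norm (schauder_proj b n (x k) - schauder_proj b n (x l)) \<le> e / 2"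
      by (rule eventually_sequentiallyI)
  qed simp
  have "e / 2 < e" using \<open>0 < e\<close> by simp
  then show "\<forall>\<^sub>F k in sequentially. \<forall>n\<in>UNIV. dist (schauder_proj b n (x k)) (\<Sum>i<n. c i *\<^sub>R b i) < e"
    unfolding dist_norm using bound by (intro eventually_sequentiallyI[of K]) (meson le_less_trans)
qed

end

lemma basis_norm_complete:
  fixes b :: "nat \<Rightarrow> 'a::banach"
  assumes basis: "schauder_basis b"
    and Cauchy: "\<And>e. 0 < e \<Longrightarrow> \<exists>M. \<forall>m\<ge>M. \<forall>n\<ge>M. basis_norm b (x m - x n) < e"
  shows "\<exists>y. (\<lambda>k. basis_norm b (x k - y)) \<longlonglongrightarrow> 0"
proof -
  obtain c where c: "\<And>i. (\<lambda>k. schauder_coeff b (x k) i) \<longlonglongrightarrow> c i"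
    using schauder_coeff_convergent[OF basis Cauchy] unfolding convergent_def by metis
  define S where "S n = (\<Sum>i<n. c i *\<^sub>R b i)" for n
  have unif: "uniform_limit UNIV (\<lambda>k n. schauder_proj b n (x k)) S sequentially"
    unfolding S_def by (rule schauder_proj_uniform_limit[OF basis Cauchy c])
  have "Cauchy x"
  proof (rule CauchyI)
    fix e :: real assume "0 < e"
    then show "\<exists>M. \<forall>m\<ge>M. \<forall>n\<ge>M. norm (x m - x n) < e"
      using Cauchy norm_le_basis_norm[OF basis] by (meson le_less_trans)
  qed
  then obtain y where "x \<longlonglongrightarrow> y" using Cauchy_convergent_iff convergent_def by blast
  \<comment> \<open>the projections need not be continuous yet, so \<open>S\<close> is identified through the uniform limit\<close>
  have "S \<longlonglongrightarrow> y"
  proof (rule swap_uniform_limit'[OF _ \<open>x \<longlonglongrightarrow> y\<close> unif])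
    show "\<forall>\<^sub>F k in sequentially. (\<lambda>n. schauder_proj b n (x k)) \<longlonglongrightarrow> x k"
      using schauder_proj_tendsto[OF basis] by simp
  qed simp_all
  then have "schauder_coeff b y = c" unfolding S_def by (rule schauder_coeff_eqI[OF basis])
  then have proj_y: "schauder_proj b n y = S n" for n by (simp add: schauder_proj_def S_def)
  have "(\<lambda>k. basis_norm b (x k - y)) \<longlonglongrightarrow> 0"
  proof (rule tendstoI)
    fix r :: real assume "0 < r"
    then have "\<forall>\<^sub>F k in sequentially. \<forall>n\<in>UNIV. dist (schauder_proj b n (x k)) (S n) < r / 2"
      by (intro uniform_limitD[OF unif]) simp
    then show "\<forall>\<^sub>F k in sequentially. dist (basis_norm b (x k - y)) 0 < r"
    proof eventually_elim
      case (elim k)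
      then have "basis_norm b (x k - y) \<le> r / 2"
        by (intro basis_norm_le[OF basis]) (simp add: dist_norm schauder_proj_diff[OF basis] proj_y less_imp_le)
      then show ?case using basis_norm_nonneg[OF basis, of "x k - y"] \<open>0 < r\<close> by simp
    qed
  qed
  then show ?thesis ..
qed

lemma finer_complete_norm_basis_norm:
  fixes b :: "nat \<Rightarrow> 'a::banach"
  assumes "schauder_basis b"
  shows "finer_complete_norm (basis_norm b)"
  by unfold_locales
    (use assms in \<open>auto intro: basis_norm_add_le basis_norm_scaleR norm_le_basis_norm basis_norm_complete\<close>)

lemma schauder_coeff_bounded:
  fixes b :: "nat \<Rightarrow> 'a::banach"
  assumes basis: "schauder_basis b"
  obtains K where "\<And>x i. \<bar>schauder_coeff b x i\<bar> * norm (b i) \<le> K * norm x"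
proof -
  interpret finer_complete_norm "basis_norm b"
    using basis by (rule finer_complete_norm_basis_norm)
  obtain K where K: "\<And>x. basis_norm b x \<le> K * norm x" using p_le_norm by blast
  have "\<bar>schauder_coeff b x i\<bar> * norm (b i) \<le> 2 * K * norm x" for x i
  proof -
    have "\<bar>schauder_coeff b x i\<bar> * norm (b i) \<le> 2 * basis_norm b x"
      by (rule schauder_coeff_le_basis_norm[OF basis])
    also have "\<dots> \<le> 2 * K * norm x" using K[of x] by simp
    finally show ?thesis .
  qed
  then show thesis by (rule that)
qed

section \<open>Topological independence\<close>

lemma int_mult_eq_scaleR: "int_mult z a = of_int z *\<^sub>R (a::'a::real_vector)"
  unfolding int_mult_def by (auto simp: sum_constant_scaleR)

lemma top_independentI_norm_bound:
  fixes A :: "'a::real_normed_vector set"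
  assumes "0 \<notin> A"
    and bound: "\<And>F f a. finite F \<Longrightarrow> F \<subseteq> A \<Longrightarrow> a \<in> F \<Longrightarrow> norm (f a *\<^sub>R a) \<le> K * norm (\<Sum>a\<in>F. f a *\<^sub>R a)"
  shows "top_independent A"
  unfolding top_independent_def
proof (intro conjI allI impI assms(1))
  fix W :: "'a set" assume "nhd0 W"
  then obtain e where "0 < e" and eW: "ball 0 e \<subseteq> W"
    unfolding nhd0_def open_contains_ball by blast
  define U where "U = ball (0::'a) (e / (\<bar>K\<bar> + 1))"
  have "nhd0 U" unfolding nhd0_def U_def using \<open>0 < e\<close> by (intro exI[of _ U]) (auto simp: U_def)
  moreover have "int_mult (z a) a \<in> W"
    if "finite F" "F \<subseteq> A" "(\<Sum>a\<in>F. int_mult (z a) a) \<in> U" "a \<in> F" for F z a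
  proof -
    define x where "x = (\<Sum>a\<in>F. of_int (z a) *\<^sub>R a)"
    have "norm x < e / (\<bar>K\<bar> + 1)" using that(3) by (simp add: x_def U_def int_mult_eq_scaleR)
    have "norm (int_mult (z a) a) \<le> K * norm x"
      using bound[OF that(1,2,4), of "\<lambda>a. of_int (z a)"] by (simp add: x_def int_mult_eq_scaleR)
    also have "\<dots> \<le> \<bar>K\<bar> * norm x" by (simp add: mult_right_mono)
    also have "\<dots> \<le> \<bar>K\<bar> * (e / (\<bar>K\<bar> + 1))"
      using \<open>norm x < _\<close> by (intro mult_left_mono) simp_all
    also have "\<dots> < e" using \<open>0 < e\<close> by (simp add: field_simps)
    finally show ?thesis using eW by auto
  qed
  ultimately show "\<exists>U. nhd0 U \<and> (\<forall>F z. finite F \<and> F \<subseteq> A \<and> (\<Sum>a\<in>F. int_mult (z a) a) \<in> U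
                      \<longrightarrow> (\<forall>a\<in>F. int_mult (z a) a \<in> W))"
    by blast
qed

lemma top_independent_schauder_basis:
  fixes b :: "nat \<Rightarrow> 'a::banach"
  assumes basis: "schauder_basis b"
  shows "top_independent (range b)"
proof -
  obtain K where K: "\<And>x i. \<bar>schauder_coeff b x i\<bar> * norm (b i) \<le> K * norm x"
    using schauder_coeff_bounded[OF basis] by blast
  show ?thesis
  proof (rule top_independentI_norm_bound)
    show "0 \<notin> range b" using schauder_basis_nonzero[OF basis] by auto
    fix F f a assume F: "finite F" "F \<subseteq> range b" and "a \<in> F"
    then obtain j where "a = b j" by blast
    then have "schauder_coeff b (\<Sum>a\<in>F. f a *\<^sub>R a) j = f a"
      using schauder_coeff_sum[OF basis F] \<open>a \<in> F\<close> by simp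
    then show "norm (f a *\<^sub>R a) \<le> K * norm (\<Sum>a\<in>F. f a *\<^sub>R a)"
      using K[of "\<Sum>a\<in>F. f a *\<^sub>R a" j] \<open>a = b j\<close> by simp
  qed
qed

section \<open>The Tychonoff direct sum\<close>

lemma zero_in_gen_subgroup: "0 \<in> gen_subgroup A"
  unfolding gen_subgroup_def by (rule CollectI, rule exI[of _ "{}"]) auto

lemma scaleR_of_int_in_gen_subgroup: "of_int k *\<^sub>R (a::'a::real_vector) \<in> gen_subgroup {a}"
  unfolding gen_subgroup_def
  by (intro CollectI exI[of _ "{a}"] exI[of _ "\<lambda>_. k"]) (simp add: int_mult_eq_scaleR)

lemma topspace_dsum_topology: "topspace (dsum_topology A) = dsum_carrier A"
  unfolding dsum_topology_def dsum_carrier_def by (auto simp: topspace_subtopology)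

lemma dsum_topology_open_contains_single:
  fixes A :: "'a::{topological_space, ab_group_add} set"
  assumes "infinite A" and "openin (dsum_topology A) N" and "restrict (\<lambda>_. 0) A \<in> N"
  obtains a where "a \<in> A"
    and "\<And>v. v \<in> gen_subgroup {a} \<Longrightarrow> restrict (\<lambda>c. if c = a then v else 0) A \<in> N"
proof -
  let ?X = "\<lambda>a. top_of_set (gen_subgroup {a})"
  obtain T where T: "openin (product_topology ?X A) T" and N: "N = T \<inter> dsum_carrier A"
    using assms(2) unfolding dsum_topology_def openin_subtopology by blast
  define g0 where "g0 = restrict (\<lambda>_. 0::'a) A"
  have "g0 \<in> T" using assms(3) N unfolding g0_def by blast
  then obtain U where U: "finite {a \<in> A. U a \<noteq> topspace (?X a)}" "g0 \<in> Pi\<^sub>E A U" "Pi\<^sub>E A U \<subseteq> T"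
    using T unfolding openin_product_topology_alt by blast
  have "\<not> A \<subseteq> {a \<in> A. U a \<noteq> topspace (?X a)}" using U(1) \<open>infinite A\<close> finite_subset by blast
  then obtain a where "a \<in> A" and Ua: "U a = gen_subgroup {a}" by auto
  have "restrict (\<lambda>c. if c = a then v else 0) A \<in> N" if v: "v \<in> gen_subgroup {a}" for v
  proof -
    define g where "g = restrict (\<lambda>c. if c = a then v else 0) A"
    have "finite {c \<in> A. g c \<noteq> 0}" by (rule finite_subset[of _ "{a}"]) (auto simp: g_def)
    moreover have "g \<in> (\<Pi>\<^sub>E c\<in>A. gen_subgroup {c})"
      using v by (simp add: g_def zero_in_gen_subgroup)
    ultimately have "g \<in> dsum_carrier A" unfolding dsum_carrier_def by blast
    moreover have "g c \<in> U c" if "c \<in> A" for c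
    proof (cases "c = a")
      case True then show ?thesis using that Ua v by (simp add: g_def)
    next
      case False
      have "g0 c \<in> U c" using U(2) that by auto
      then show ?thesis using False that by (simp add: g_def g0_def)
    qed
    then have "g \<in> Pi\<^sub>E A U" by (auto simp: g_def)
    ultimately show ?thesis using U(3) N unfolding g_def by blast
  qed
  with \<open>a \<in> A\<close> show thesis by (rule that)
qed

lemma not_tychonoff_direct_sum_infinite:
  fixes A :: "'a::real_normed_vector set"
  assumes "infinite A" and "0 \<notin> A"
  shows "\<not> is_tychonoff_direct_sum A"
proof
  assume "is_tychonoff_direct_sum A"
  then have cont: "continuous_map (dsum_topology A) (top_of_set (gen_subgroup A)) (dsum_map A)"
    unfolding is_tychonoff_direct_sum_def by (blast intro: homeomorphic_imp_continuous_map)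
  define V where "V = gen_subgroup A \<inter> ball 0 1"
  define N where "N = {g \<in> dsum_carrier A. dsum_map A g \<in> V}"
  have "openin (top_of_set (gen_subgroup A)) V"
    unfolding V_def by (rule openin_open_Int) simp
  then have "openin (dsum_topology A) N"
    unfolding N_def topspace_dsum_topology[symmetric] by (rule openin_continuous_map_preimage[OF cont])
  moreover have "restrict (\<lambda>_. 0) A \<in> N"
  proof -
    have "restrict (\<lambda>_. 0) A \<in> dsum_carrier A"
      unfolding dsum_carrier_def by (simp add: zero_in_gen_subgroup)
    moreover have "dsum_map A (restrict (\<lambda>_. 0) A) = 0" unfolding dsum_map_def by simp
    ultimately show ?thesis unfolding N_def V_def by (simp add: zero_in_gen_subgroup)
  qed
  ultimately obtain a where "a \<in> A"
    and single: "\<And>v. v \<in> gen_subgroup {a} \<Longrightarrow> restrict (\<lambda>c. if c = a then v else 0) A \<in> N"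
    by (rule dsum_topology_open_contains_single[OF \<open>infinite A\<close>]) blast
  have "0 < norm a" using \<open>a \<in> A\<close> \<open>0 \<notin> A\<close> by auto
  obtain m :: nat where "1 / norm a < real m" using reals_Archimedean2 by blast
  then have m: "1 < real m * norm a" using \<open>0 < norm a\<close> by (simp add: field_simps)
  define g where "g = restrict (\<lambda>c. if c = a then real m *\<^sub>R a else 0) A"
  have "g \<in> N" unfolding g_def
    by (rule single) (use scaleR_of_int_in_gen_subgroup[of "int m" a] in simp)
  then have "dsum_map A g \<in> V" unfolding N_def by blast
  moreover have "0 < m" using m by (cases m) auto
  then have "real m *\<^sub>R a \<noteq> 0" using \<open>0 < norm a\<close> by auto
  then have "{c \<in> A. g c \<noteq> 0} = {a}" using \<open>a \<in> A\<close> by (auto simp: g_def)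
  then have "dsum_map A g = real m *\<^sub>R a" unfolding dsum_map_def using \<open>a \<in> A\<close> by (simp add: g_def)
  ultimately show False using m by (simp add: V_def)
qed

theorem mainTheorem8:
  fixes b :: "nat \<Rightarrow> 'a::banach"
  assumes "infinite_dimensional TYPE('a)"
    and "schauder_basis b"
  shows "top_independent (range b) \<and> \<not> is_tychonoff_direct_sum (range b)"
proof
  show "top_independent (range b)" by (rule top_independent_schauder_basis[OF assms(2)])
  have "infinite (range b)" using schauder_basis_inj[OF assms(2)] by (rule range_inj_infinite)
  moreover have "0 \<notin> range b" using schauder_basis_nonzero[OF assms(2)] by auto
  ultimately show "\<not> is_tychonoff_direct_sum (range b)" by (rule not_tychonoff_direct_sum_infinite)
qed

end
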